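(* Let $L=(l_1,\dots,l_n)$, $n\ge 4$, be a generic length vector satisfying the strict triangle inequality, and let $l_a\ge l_b\ge l_c$ be its three largest entries (for distinct indices $a,b,c$). Suppose $l_b+l_c<|L|/2$. Then for every vertex $(I,J,K)$ of $\Gamma(L)$ there is a path in $\Gamma(L)$ of length at most $6$ from $(I,J,K)$ to its mirror image $(J,I,K)$.
   Context: Let $n\ge 4$ and $L=(l_1,\dots,l_n)$ be positive reals with $l_i<\sum_{j\ne i}l_j$ for every $i$ (strict triangle inequality), and generic: there is no $J\subseteq[n]$ with $\sum_{i\in J}l_i=\sum_{i\notin J}l_i$. Here $[n]=\{1,\dots,n\}$ and $|L|=\sum_{i=1}^n l_i$. A set $I\subseteq[n]$ is short if $\sum_{i\in I}l_i<|L|/2$ and long otherwise. A cyclically ordered partition of $[n]$ into $k$ parts is a sequence $(A_1,\dots,A_k)$ of pairwise disjoint nonempty sets with union $[n]$, considered up to cyclic shifts $(A_1,\dots,A_k)\sim(A_2,\dots,A_k,A_1)$; there is no ordering inside a part. It is admissible if every part is short. The graph $\Gamma(L)$ has as vertices the admissible cyclically ordered partitions of $[n]$ into 3 parts, written $(I,J,K)$, and as edges the admissible cyclically ordered partitions into 4 parts $(A,B,C,D)$; such an edge is incident to each of the partitions $(A\cup B,C,D)$, $(A,B\cup C,D)$, $(A,B,C\cup D)$, $(D\cup A,B,C)$ that is admissible. Equivalently, two vertices are adjacent iff one is obtained from the other by moving a nonempty proper subset of one part into another part. The length of a path is its number of edges. The mirror image of a vertex $(I,J,K)$ is the vertex $(J,I,K)$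 (same parts, reversed cyclic order). (The condition $l_b+l_c<|L|/2$ is equivalent to connectedness of the moduli space of planar configurations of $L$.) *)

theory Defs
  imports Complex_Main
begin

text \<open>Lengths are a function l on the index set [n] = {1..n}.\<close>

definition total_len :: "(nat \<Rightarrow> real) \<Rightarrow> nat \<Rightarrow> real" where
  "total_len l n = (\<Sum>i\<in>{1..n}. l i)"

definition short :: "(nat \<Rightarrow> real) \<Rightarrow> nat \<Rightarrow> nat set \<Rightarrow> bool" where
  "short l n I \<longleftrightarrow> (\<Sum>i\<in>I. l i) < total_len l n / 2"

definition length_vector :: "(nat \<Rightarrow> real) \<Rightarrow> nat \<Rightarrow> bool" where
  "length_vector l n \<longleftrightarrow> (\<forall>i\<in>{1..n}. 0 < l i)
     \<and> (\<forall>i\<in>{1..n}. l i < (\<Sum>j\<in>{1..n}-{i}. l j))"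

definition generic :: "(nat \<Rightarrow> real) \<Rightarrow> nat \<Rightarrow> bool" where
  "generic l n \<longleftrightarrow> (\<forall>J. J \<subseteq> {1..n} \<longrightarrow> (\<Sum>i\<in>J. l i) \<noteq> (\<Sum>i\<in>{1..n}-J. l i))"

text \<open>Admissible ordered partition of [n] given as a list of parts (a representative
  of a cyclically ordered partition).\<close>
definition admissible :: "(nat \<Rightarrow> real) \<Rightarrow> nat \<Rightarrow> nat set list \<Rightarrow> bool" where
  "admissible l n ps \<longleftrightarrow> (\<forall>A\<in>set ps. A \<noteq> {} \<and> short l n A)
     \<and> (\<forall>i<length ps. \<forall>j<length ps. i \<noteq> j \<longrightarrow> ps!i \<inter> ps!j = {})
     \<and> \<Union>(set ps) = {1..n}"

definition cyc_eq :: "'a list \<Rightarrow> 'a list \<Rightarrow> bool" where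
  "cyc_eq xs ys \<longleftrightarrow> (\<exists>k. ys = rotate k xs)"

text \<open>Vertices of Gamma(L): admissible cyclically ordered 3-partitions.\<close>
definition gvertex :: "(nat \<Rightarrow> real) \<Rightarrow> nat \<Rightarrow> nat set list \<Rightarrow> bool" where
  "gvertex l n v \<longleftrightarrow> length v = 3 \<and> admissible l n v"

definition merges :: "nat set list \<Rightarrow> nat set list set" where
  "merges e = {[e!0 \<union> e!1, e!2, e!3], [e!0, e!1 \<union> e!2, e!3],
               [e!0, e!1, e!2 \<union> e!3], [e!3 \<union> e!0, e!1, e!2]}"

text \<open>An edge (admissible cyclically ordered 4-partition e) joins v and w if v and w
  are (up to cyclic shift) two distinct admissible merges of e.\<close>
definition gadj :: "(nat \<Rightarrow> real) \<Rightarrow> nat \<Rightarrow> nat set list \<Rightarrow> nat set list \<Rightarrow> bool" where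
  "gadj l n v w \<longleftrightarrow> gvertex l n v \<and> gvertex l n w \<and> \<not> cyc_eq v w \<and>
     (\<exists>e. length e = 4 \<and> admissible l n e \<and>
        (\<exists>p\<in>merges e. \<exists>q\<in>merges e. cyc_eq p v \<and> cyc_eq q w))"

text \<open>A path of length k from v to w: a list of k+1 vertices with consecutive ones
  adjacent; endpoints are compared up to cyclic shift.\<close>
definition gpath :: "(nat \<Rightarrow> real) \<Rightarrow> nat \<Rightarrow> nat set list list \<Rightarrow> bool" where
  "gpath l n ps \<longleftrightarrow> ps \<noteq> [] \<and> (\<forall>i. Suc i < length ps \<longrightarrow> gadj l n (ps!i) (ps!Suc i))
      \<and> (\<forall>p\<in>set ps. gvertex l n p)"

definition mirror :: "nat set list \<Rightarrow> nat set list" where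
  "mirror v = [v!1, v!0, v!2]"

end

theory Submission
  imports Defs
begin

text \<open>Rotate a vertex so that the longest link \<open>a\<close> lies in its first part \<open>I\<close>; up to rotation
  the mirror image of \<open>(I, J, K)\<close> is \<open>(I, K, J)\<close>. Let \<open>r = |L|/2 - \<Sum>I\<close> be the room left
  in \<open>I\<close> and \<open>x\<close>, \<open>y\<close> the longest links of \<open>J\<close>, \<open>K\<close>. Three moves exchange \<open>J\<close> and \<open>K\<close>
  around a single link \<open>x\<close> as soon as \<open>x \<union> K\<close> and \<open>(J - x) \<union> K\<close> are short, i.e. when both
  \<open>l x\<close> and \<open>\<Sum>(J - x)\<close> exceed \<open>r\<close>. Otherwise one first moves a set \<open>S \<subseteq> J\<close> into \<open>I\<close>,
  which lowers \<open>r\<close>, and moves it back at the end: if \<open>\<Sum>(J - x) > r\<close> a suitable \<open>S\<close> is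
  found greedily among links not longer than \<open>x\<close>; if not, \<open>S = J - x\<close> works with \<open>y\<close> in the
  role of \<open>x\<close>, because \<open>l x + l y < |L|/2\<close> by the hypothesis \<open>l b + l c < |L|/2\<close>. Genericity
  makes all comparisons with \<open>|L|/2\<close> strict, and comparing part sums shows that one of these
  cases, or its counterpart with \<open>J\<close> and \<open>K\<close> exchanged, always applies. The walks found have
  at most five edges.\<close>

lemma gvertex3_iff:
  "gvertex l n [A, B, C] \<longleftrightarrow>
     A \<noteq> {} \<and> B \<noteq> {} \<and> C \<noteq> {} \<and> short l n A \<and> short l n B \<and> short l n C \<and>
     A \<inter> B = {} \<and> A \<inter> C = {} \<and> B \<inter> C = {} \<and> A \<union> B \<union> C = {1..n}"
  unfolding gvertex_def admissible_def
  by (simp add: numeral_3_eq_3 less_Suc_eq conj_disj_distribR all_conj_distrib Int_commute) blast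

lemma gvertex_length3:
  assumes "gvertex l n v"
  obtains A B C where "v = [A, B, C]"
  using assms by (auto simp: gvertex_def numeral_3_eq_3 length_Suc_conv)

lemma gvertex_rotate3: "gvertex l n [A, B, C] \<Longrightarrow> gvertex l n [B, C, A]"
  unfolding gvertex3_iff by (simp add: Int_commute Un_commute Un_left_commute)

lemma gvertex_swap23: "gvertex l n [A, B, C] \<Longrightarrow> gvertex l n [A, C, B]"
  unfolding gvertex3_iff by (simp add: Int_commute Un_commute Un_left_commute)

lemma gvertex3_sum:
  assumes "gvertex l n [I, J, K]"
  shows "sum l I + sum l J + sum l K = total_len l n"
proof -
  have parts: "I \<inter> J = {}" "I \<inter> K = {}" "J \<inter> K = {}" "I \<union> J \<union> K = {1..n}"
    using assms unfolding gvertex3_iff by simp_all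
  then have "finite I" "finite J" "finite K"
    by (metis finite_Un finite_atLeastAtMost)+
  then show ?thesis
    unfolding total_len_def parts(4)[symmetric] using parts(1-3)
    by (simp add: sum.union_disjoint Int_Un_distrib2)
qed

lemma cyc_eq_refl: "cyc_eq xs xs"
  unfolding cyc_eq_def by (rule exI[of _ 0]) simp

lemma cyc_eq_rotate: "cyc_eq xs (rotate k xs)"
  unfolding cyc_eq_def by blast

lemma cyc_eq_trans: "cyc_eq xs ys \<Longrightarrow> cyc_eq ys zs \<Longrightarrow> cyc_eq xs zs"
  unfolding cyc_eq_def by (metis rotate_rotate)

lemma cyc_eq_sym:
  assumes "cyc_eq xs ys"
  shows "cyc_eq ys xs"
proof -
  obtain k where ys: "ys = rotate k xs"
    using assms unfolding cyc_eq_def by blast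
  have "rotate (length xs - k mod length xs) ys = rotate (length xs - k mod length xs + k mod length xs) xs"
    unfolding ys by (metis rotate_conv_mod rotate_rotate)
  also have "\<dots> = xs"
    by (cases "xs = []") simp_all
  finally show ?thesis
    unfolding cyc_eq_def by metis
qed

lemma cyc_eq_set: "cyc_eq xs ys \<Longrightarrow> set ys = set xs"
  unfolding cyc_eq_def by auto

lemma cyc_eq_rotate3: "cyc_eq [A, B, C] [B, C, A]" "cyc_eq [A, B, C] [C, A, B]"
  using cyc_eq_rotate[of "[A, B, C]" 1] cyc_eq_rotate[of "[A, B, C]" 2]
  by (simp_all add: numeral_2_eq_2)

lemma cyc_eq3_cases:
  assumes "cyc_eq [A, B, C] w"
  shows "w = [A, B, C] \<or> w = [B, C, A] \<or> w = [C, A, B]"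
proof -
  let ?R = "{[A, B, C], [B, C, A], [C, A, B]}"
  have step: "x \<in> ?R \<Longrightarrow> rotate1 x \<in> ?R" for x
    by (elim insertE emptyE) simp_all
  have "rotate k [A, B, C] \<in> ?R" for k
    by (induction k) (simp, unfold rotate_Suc, erule step)
  then show ?thesis
    using assms unfolding cyc_eq_def by blast
qed

lemma gvertex_cyc_eq:
  assumes "gvertex l n v" "cyc_eq v w"
  shows "gvertex l n w"
proof -
  obtain A B C where v: "v = [A, B, C]"
    using assms(1) by (rule gvertex_length3)
  then have "gvertex l n [B, C, A]" "gvertex l n [C, A, B]"
    using assms(1) gvertex_rotate3 by blast+
  then show ?thesis
    using cyc_eq3_cases[of A B C w] assms v by auto
qed

lemma admissible4I:
  assumes "A \<noteq> {}" "B \<noteq> {}" "C \<noteq> {}" "D \<noteq> {}"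
    and "short l n A" "short l n B" "short l n C" "short l n D"
    and "A \<inter> B = {}" "A \<inter> C = {}" "A \<inter> D = {}" "B \<inter> C = {}" "B \<inter> D = {}" "C \<inter> D = {}"
    and "A \<union> B \<union> C \<union> D = {1..n}"
  shows "admissible l n [A, B, C, D]"
  using assms by (auto simp: admissible_def less_Suc_eq nth_Cons')

lemma gadjI:
  assumes "gvertex l n v" "gvertex l n w" "\<not> cyc_eq v w" "admissible l n e" "length e = 4"
    and "v \<in> merges e" "w \<in> merges e"
  shows "gadj l n v w"
  unfolding gadj_def using assms cyc_eq_refl by blast

lemma gadj_sym: "gadj l n v w \<Longrightarrow> gadj l n w v"
  unfolding gadj_def using cyc_eq_sym by blast

lemma gadj_cyc_eq:
  assumes "gadj l n v w" "cyc_eq v v'" "cyc_eq w w'"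
  shows "gadj l n v' w'"
  using assms gvertex_cyc_eq unfolding gadj_def by (meson cyc_eq_sym cyc_eq_trans)

text \<open>Walks with exactly \<open>k\<close> edges; as vertices of \<open>\<Gamma>(L)\<close> are cyclic classes, the end of a
  walk is only determined up to rotation.\<close>

inductive gwalk :: "(nat \<Rightarrow> real) \<Rightarrow> nat \<Rightarrow> nat \<Rightarrow> nat set list \<Rightarrow> nat set list \<Rightarrow> bool"
  for l n where
  gwalk_0: "gvertex l n v \<Longrightarrow> cyc_eq v w \<Longrightarrow> gwalk l n 0 v w"
| gwalk_Suc: "gadj l n u v \<Longrightarrow> gwalk l n k v w \<Longrightarrow> gwalk l n (Suc k) u w"

lemma gwalk_edge: "gadj l n v w \<Longrightarrow> gwalk l n 1 v w"
  using gwalk.intros cyc_eq_refl unfolding gadj_def by fastforce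

lemma gwalk_cyc_eq_left:
  assumes "gwalk l n k v w" "cyc_eq v v'"
  shows "gwalk l n k v' w"
  using assms
proof cases
  case gwalk_0
  then show ?thesis
    using assms(2) by (meson cyc_eq_sym cyc_eq_trans gvertex_cyc_eq gwalk.gwalk_0)
next
  case (gwalk_Suc u k')
  then show ?thesis
    using assms(2) by (meson cyc_eq_refl gadj_cyc_eq gwalk.gwalk_Suc)
qed

lemma gwalk_snoc: "gwalk l n k u v \<Longrightarrow> gadj l n v w \<Longrightarrow> gwalk l n (Suc k) u w"
proof (induction rule: gwalk.induct)
  case (gwalk_0 u v)
  then show ?case
    by (metis One_nat_def cyc_eq_refl cyc_eq_sym gadj_cyc_eq gwalk_edge)
next
  case gwalk_Suc
  then show ?case
    by (simp add: gwalk.gwalk_Suc)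
qed

lemma gwalk_sym: "gwalk l n k v w \<Longrightarrow> gwalk l n k w v"
proof (induction rule: gwalk.induct)
  case (gwalk_0 v w)
  then show ?case
    by (simp add: cyc_eq_sym gvertex_cyc_eq gwalk.gwalk_0)
next
  case gwalk_Suc
  then show ?case
    by (simp add: gadj_sym gwalk_snoc)
qed

lemma gwalk_cyc_eq:
  assumes "gwalk l n k v w" "cyc_eq v v'" "cyc_eq w w'"
  shows "gwalk l n k v' w'"
  using assms gwalk_cyc_eq_left gwalk_sym by metis

lemma gwalk_trans: "gwalk l n i u v \<Longrightarrow> gwalk l n j v w \<Longrightarrow> gwalk l n (i + j) u w"
proof (induction rule: gwalk.induct)
  case gwalk_0
  then show ?case
    using cyc_eq_sym gwalk_cyc_eq_left by fastforce
next
  case gwalk_Suc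
  then show ?case
    by (simp add: gwalk.gwalk_Suc)
qed

lemma gpath_Cons: "gadj l n v w \<Longrightarrow> gpath l n (w # ps) \<Longrightarrow> gpath l n (v # w # ps)"
  unfolding gpath_def gadj_def by (auto simp: nth_Cons split: nat.split)

lemma gwalk_gpath:
  "gwalk l n k v w \<Longrightarrow>
     \<exists>ps. gpath l n ps \<and> hd ps = v \<and> cyc_eq (last ps) w \<and> length ps = Suc k"
proof (induction rule: gwalk.induct)
  case (gwalk_0 v w)
  then show ?case
    by (intro exI[of _ "[v]"]) (simp add: gpath_def)
next
  case (gwalk_Suc u v k w)
  then obtain ps where "gpath l n ps" "hd ps = v" "cyc_eq (last ps) w" "length ps = Suc k"
    by blast
  then show ?case
    using gpath_Cons[OF gwalk_Suc.hyps(1), of "tl ps"]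
    by (intro exI[of _ "u # ps"]) (cases ps; auto)
qed

lemma subset_sum_between:
  fixes f :: "'a \<Rightarrow> 'b::linordered_ab_group_add"
  assumes "finite Z" "\<forall>z\<in>Z. f z \<le> w" "0 \<le> lo" "lo < sum f Z"
  shows "\<exists>S\<subseteq>Z. S \<noteq> {} \<and> lo < sum f S \<and> sum f S \<le> lo + w"
  using assms(1,2,4)
proof (induction Z rule: finite_induct)
  case empty
  then show ?case
    using assms(3) by simp
next
  case (insert z F)
  show ?case
  proof (cases "lo < sum f F")
    case True
    then show ?thesis
      using insert by blast
  next
    case False
    then have "sum f (insert z F) \<le> lo + w"
      using insert add_mono[of "f z" w "sum f F" lo] by (simp add: add.commute)
    then show ?thesis
      using insert.prems(2) by blast
  qed
qed

lemma obtains_arg_max: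
  fixes f :: "'a \<Rightarrow> 'b::linorder"
  assumes "finite A" "A \<noteq> {}"
  obtains x where "x \<in> A" "\<forall>y\<in>A. f y \<le> f x"
  using obtains_MAX[OF assms, of f] assms(1) by (metis Max_ge finite_imageI imageI)

context
  fixes l :: "nat \<Rightarrow> real" and n :: nat
  assumes pos: "\<forall>i\<in>{1..n}. 0 < l i"
begin

lemma short_mono:
  assumes "short l n A" "B \<subseteq> A" "A \<subseteq> {1..n}"
  shows "short l n B"
proof -
  have "sum l B \<le> sum l A"
    using assms pos by (intro sum_mono2) (auto intro: finite_subset less_imp_le)
  then show ?thesis
    using assms(1) unfolding short_def by linarith
qed

lemma gadj_move:
  assumes v: "gvertex l n [X, Y, Z]"
    and S: "S \<subseteq> Y" "S \<noteq> {}" "Y - S \<noteq> {}" and short: "short l n (S \<union> Z)"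
  shows "gadj l n [X, Y, Z] [X, Y - S, S \<union> Z]"
proof -
  have parts: "X \<noteq> {}" "Z \<noteq> {}" "short l n X" "short l n Y" "short l n Z"
    "X \<inter> Y = {}" "X \<inter> Z = {}" "Y \<inter> Z = {}" "X \<union> Y \<union> Z = {1..n}"
    using v unfolding gvertex3_iff by simp_all
  have shorts: "short l n S" "short l n (Y - S)"
    using short_mono[OF \<open>short l n Y\<close>] parts(9) S(1) by blast+
  have e: "admissible l n [X, Y - S, S, Z]"
    by (rule admissible4I) (use parts shorts S in blast)+
  have w: "gvertex l n [X, Y - S, S \<union> Z]"
    unfolding gvertex3_iff by (intro conjI) (use parts shorts S short in blast)+
  have "Y - S \<noteq> X" "Y - S \<noteq> Y" "Y - S \<noteq> Z"
    using parts(6,8) S by auto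
  then have notin: "Y - S \<notin> set [X, Y, Z]"
    by simp
  have "Y - S \<in> set [X, Y - S, S \<union> Z]"
    by simp
  then have "\<not> cyc_eq [X, Y, Z] [X, Y - S, S \<union> Z]"
    using notin cyc_eq_set by blast
  moreover have "[X, Y, Z] \<in> merges [X, Y - S, S, Z]" "[X, Y - S, S \<union> Z] \<in> merges [X, Y - S, S, Z]"
    using S(1) by (auto simp: merges_def numeral_3_eq_3 numeral_2_eq_2 Un_absorb2)
  ultimately show ?thesis
    using gadjI[OF v w _ e] by simp
qed

lemma gadj_move_back:
  assumes v: "gvertex l n [X, Y, Z]"
    and S: "S \<subseteq> Y" "S \<noteq> {}" "Y - S \<noteq> {}" and short: "short l n (X \<union> S)"
  shows "gadj l n [X, Y, Z] [X \<union> S, Y - S, Z]"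
proof -
  have parts: "X \<noteq> {}" "Z \<noteq> {}" "short l n Y" "short l n Z"
    "X \<inter> Y = {}" "X \<inter> Z = {}" "Y \<inter> Z = {}" "X \<union> Y \<union> Z = {1..n}"
    using v unfolding gvertex3_iff by simp_all
  have "short l n (Y - S)"
    using short_mono[OF \<open>short l n Y\<close>] parts(8) by blast
  have XS: "(X \<union> S) - S = X" and YS: "S \<union> (Y - S) = Y"
    using parts(5) S(1) by auto
  have "gvertex l n [Z, X \<union> S, Y - S]"
    unfolding gvertex3_iff
    by (intro conjI) (use parts S short \<open>short l n (Y - S)\<close> in blast)+
  then have "gadj l n [Z, X \<union> S, Y - S] [Z, (X \<union> S) - S, S \<union> (Y - S)]"
    by (rule gadj_move) (use S parts(1,3) XS YS in auto)
  then have "gadj l n [Z, X, Y] [Z, X \<union> S, Y - S]"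
    unfolding XS YS by (rule gadj_sym)
  then show ?thesis
    by (rule gadj_cyc_eq) (rule cyc_eq_rotate3)+
qed

text \<open>The walk \<open>(P, X, Y) \<rightarrow> (P, X - q, q \<union> Y) \<rightarrow> (P, (X - q) \<union> Y, q) \<rightarrow> (P, Y, X)\<close>.\<close>

lemma gwalk_swap:
  assumes v: "gvertex l n [P, X, Y]"
    and q: "q \<in> X" "X - {q} \<noteq> {}"
    and short: "short l n ((X - {q}) \<union> Y)" "short l n ({q} \<union> Y)"
  shows "gwalk l n 3 [P, X, Y] [P, Y, X]"
proof -
  define X0 where "X0 = X - {q}"
  have parts: "P \<noteq> {}" "Y \<noteq> {}" "short l n P" "short l n X"
    "P \<inter> X = {}" "P \<inter> Y = {}" "X \<inter> Y = {}" "P \<union> X \<union> Y = {1..n}"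
    using v unfolding gvertex3_iff by simp_all
  have X: "X0 \<union> {q} = X" "(X0 \<union> Y) - Y = X0" "(X0 \<union> Y) - X0 = Y" "q \<notin> X0"
    using q(1) parts(7) unfolding X0_def by auto
  have "short l n {q}"
    using short_mono[OF \<open>short l n X\<close>] parts(8) q(1) by blast
  then have w: "gvertex l n [P, X0 \<union> Y, {q}]"
    unfolding gvertex3_iff
    by (intro conjI) (use parts q short X in \<open>auto simp: X0_def\<close>)
  have e1: "gadj l n [P, X, Y] [P, X0, {q} \<union> Y]"
    unfolding X0_def using q short by (intro gadj_move[OF v]) auto
  have "gadj l n [P, X0 \<union> Y, {q}] [P, (X0 \<union> Y) - Y, Y \<union> {q}]"
    using parts(2) X q short by (intro gadj_move[OF w]) (auto simp: X0_def Un_commute)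
  then have e2: "gadj l n [P, X0, {q} \<union> Y] [P, X0 \<union> Y, {q}]"
    unfolding X(2) by (simp add: Un_commute gadj_sym)
  have e3: "gadj l n [P, X0 \<union> Y, {q}] [P, Y, X]"
    using gadj_move[OF w, of X0] X parts(2) q(2) parts(4) unfolding X0_def by auto
  show ?thesis
    using gwalk_Suc[OF e1 gwalk_Suc[OF e2 gwalk_edge[OF e3]]] by (simp add: numeral_3_eq_3)
qed

lemma gwalk_extend:
  assumes v: "gvertex l n [I, J, K]"
    and S: "S \<subseteq> J" "S \<noteq> {}" "J - S \<noteq> {}" "short l n (I \<union> S)"
    and walk: "gwalk l n k [I \<union> S, J - S, K] [I \<union> S, K, J - S]"
  shows "gwalk l n (k + 2) [I, J, K] [I, K, J]"
proof -
  have first: "gadj l n [I, J, K] [I \<union> S, J - S, K]"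
    using gadj_move_back[OF v S] .
  have "gvertex l n [K, J, I]"
    using v gvertex_swap23 gvertex_rotate3 by blast
  moreover have "short l n (S \<union> I)"
    using S(4) by (simp add: Un_commute)
  ultimately have "gadj l n [K, J, I] [K, J - S, S \<union> I]"
    using S by (intro gadj_move) auto
  then have "gadj l n [I \<union> S, K, J - S] [I, K, J]"
    using gadj_cyc_eq[OF gadj_sym] cyc_eq_rotate3 by (metis Un_commute)
  then show ?thesis
    using gwalk_Suc[OF first gwalk_trans[OF walk gwalk_edge]] by simp
qed

lemma gwalk_mirror_swap:
  assumes v: "gvertex l n [I, J, K]" and x: "x \<in> J"
    and room: "total_len l n / 2 - sum l I < l x" "total_len l n / 2 - sum l I < sum l (J - {x})"
  shows "gwalk l n 3 [I, J, K] [I, K, J]"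
proof -
  have parts: "short l n I" "J \<inter> K = {}" "I \<union> J \<union> K = {1..n}"
    using v unfolding gvertex3_iff by simp_all
  then have fin: "finite J" "finite K"
    by (metis finite_Un finite_atLeastAtMost)+
  have "x \<notin> K"
    using x parts(2) by blast
  have "sum l (J - {x}) = sum l J - l x" "sum l ({x} \<union> K) = l x + sum l K"
    using fin x \<open>x \<notin> K\<close> by (simp_all add: sum_diff1)
  moreover have "sum l ((J - {x}) \<union> K) = sum l (J - {x}) + sum l K"
    using fin parts(2) by (intro sum.union_disjoint) auto
  moreover have "J - {x} \<noteq> {}"
  proof
    assume "J - {x} = {}"
    then have "sum l (J - {x}) = 0"
      by (metis sum.empty)
    then show False
      using room(2) parts(1) unfolding short_def by linarith
  qed
  ultimately show ?thesis
    using gwalk_swap[OF v x] gvertex3_sum[OF v] room unfolding short_def by auto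
qed

lemma gwalk_mirror_transfer:
  assumes v: "gvertex l n [I, J, K]" and x: "x \<in> J"
    and S: "S \<subseteq> J - {x}" "S \<noteq> {}"
    and window: "total_len l n / 2 - sum l I - l x < sum l S" "sum l S < total_len l n / 2 - sum l I"
    and heavy: "total_len l n / 2 - sum l I < sum l (J - {x})"
  shows "gwalk l n 5 [I, J, K] [I, K, J]"
proof -
  have parts: "I \<inter> J = {}" "I \<union> J \<union> K = {1..n}"
    using v unfolding gvertex3_iff by simp_all
  then have fin: "finite I" "finite J" "finite S"
    using S(1) by (metis finite_Un finite_atLeastAtMost finite_Diff finite_subset)+
  have SJ: "S \<subseteq> J" "J - S \<noteq> {}" "x \<in> J - S"
    using S(1) x by auto
  have "sum l (I \<union> S) = sum l I + sum l S"
    using fin parts(1) SJ(1) by (intro sum.union_disjoint) auto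
  then have short: "short l n (I \<union> S)"
    using window(2) unfolding short_def by linarith
  then have v': "gvertex l n [I \<union> S, J - S, K]"
    using gadj_move_back[OF v SJ(1) S(2) SJ(2)] unfolding gadj_def by blast
  have "(J - S) - {x} = (J - {x}) - S"
    by blast
  then have "sum l ((J - S) - {x}) = sum l (J - {x}) - sum l S"
    using fin S(1) by (simp add: sum_diff)
  then have "gwalk l n 3 [I \<union> S, J - S, K] [I \<union> S, K, J - S]"
    using gwalk_mirror_swap[OF v' SJ(3)] \<open>sum l (I \<union> S) = _\<close> window heavy by linarith
  from gwalk_extend[OF v SJ(1) S(2) SJ(2) short this]
  show ?thesis
    by simp
qed

lemma gwalk_mirror_transfer_rest:
  assumes v: "gvertex l n [I, J, K]" and x: "x \<in> J" and y: "y \<in> K"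
    and ne: "J - {x} \<noteq> {}" and pair: "l x + l y < total_len l n / 2"
    and light: "sum l (J - {x}) < total_len l n / 2 - sum l I"
      "total_len l n / 2 - sum l I < l y + sum l (J - {x})"
  shows "gwalk l n 5 [I, J, K] [I, K, J]"
proof -
  define S where "S = J - {x}"
  have parts: "I \<inter> J = {}" "I \<union> J \<union> K = {1..n}"
    using v unfolding gvertex3_iff by simp_all
  then have fin: "finite I" "finite J" "finite K"
    by (metis finite_Un finite_atLeastAtMost)+
  have S: "S \<subseteq> J" "S \<noteq> {}" "J - S \<noteq> {}" and JS: "J - S = {x}"
    using x ne unfolding S_def by auto
  have "sum l (I \<union> S) = sum l I + sum l S"
    using fin parts(1) S(1) by (intro sum.union_disjoint) (auto simp: S_def)
  then have short: "short l n (I \<union> S)"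
    using light(1) unfolding short_def S_def by linarith
  then have "gvertex l n [I \<union> S, {x}, K]"
    using gadj_move_back[OF v S] JS unfolding gadj_def by auto
  then have v': "gvertex l n [I \<union> S, K, {x}]"
    by (rule gvertex_swap23)
  have "sum l (J - {x}) = sum l J - l x" "sum l (K - {y}) = sum l K - l y"
    using fin x y by (simp_all add: sum_diff1)
  then have "gwalk l n 3 [I \<union> S, K, {x}] [I \<union> S, {x}, K]"
    using gwalk_mirror_swap[OF v' y] \<open>sum l (I \<union> S) = _\<close> gvertex3_sum[OF v] pair light
    unfolding S_def by linarith
  then have "gwalk l n 3 [I \<union> S, J - S, K] [I \<union> S, K, J - S]"
    unfolding JS by (rule gwalk_sym)
  from gwalk_extend[OF v S short this]
  show ?thesis
    by simp
qed

lemma gwalk_mirror_balanced: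
  assumes v: "gvertex l n [I, J, K]" and x: "x \<in> J" and y: "y \<in> K"
    and pair: "l x + l y < total_len l n / 2"
    and balanced: "sum l (J - {x}) < total_len l n / 2 - sum l I"
      "sum l (K - {y}) < total_len l n / 2 - sum l I"
  shows "\<exists>k\<le>5. gwalk l n k [I, J, K] [I, K, J]"
proof -
  define r where "r = total_len l n / 2 - sum l I"
  have parts: "I \<noteq> {}" "short l n I" "short l n J" "short l n K" "I \<union> J \<union> K = {1..n}"
    using v unfolding gvertex3_iff by simp_all
  then have fin: "finite I" "finite J" "finite K"
    by (metis finite_Un finite_atLeastAtMost)+
  have sums: "sum l (J - {x}) = sum l J - l x" "sum l (K - {y}) = sum l K - l y"
    using fin x y by (simp_all add: sum_diff1)
  have sub: "I \<subseteq> {1..n}" "J \<subseteq> {1..n}" "K \<subseteq> {1..n}"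
    using parts(5) by blast+
  have nonneg: "0 \<le> sum l (J - {x})" "0 \<le> sum l (K - {y})"
    using pos sub(2,3) by (auto intro!: sum_nonneg intro: less_imp_le)
  have "0 < sum l I"
    using pos sub(1) fin(1) parts(1) by (intro sum_pos) auto
  show ?thesis
  proof (cases "J - {x} \<noteq> {} \<and> r < l y + sum l (J - {x})")
    case True
    then show ?thesis
      using gwalk_mirror_transfer_rest[OF v x y _ pair balanced(1)] unfolding r_def by blast
  next
    case notJ: False
    show ?thesis
    proof (cases "K - {y} \<noteq> {} \<and> r < l x + sum l (K - {y})")
      case True
      then have "gwalk l n 5 [I, K, J] [I, J, K]"
        using gwalk_mirror_transfer_rest[OF gvertex_swap23[OF v] y x] pair balanced(2)
        unfolding r_def by (simp add: add.commute)
      then show ?thesis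
        using gwalk_sym by blast
    next
      case notK: False
      have "sum l (J - {x}) = 0 \<or> l y + sum l (J - {x}) \<le> r"
        "sum l (K - {y}) = 0 \<or> l x + sum l (K - {y}) \<le> r"
        using notJ notK by (metis linorder_not_less sum.empty)+
      then have False
        using gvertex3_sum[OF v] parts(2-4) sums nonneg \<open>0 < sum l I\<close> pair
        unfolding r_def short_def by (elim disjE) linarith+
      then show ?thesis ..
    qed
  qed
qed

lemma gwalk_mirror_heavy:
  assumes gen: "\<And>A. A \<subseteq> {1..n} \<Longrightarrow> sum l A \<noteq> total_len l n / 2"
    and v: "gvertex l n [I, J, K]" and x: "x \<in> J" "\<forall>j\<in>J. l j \<le> l x"
    and heavy: "total_len l n / 2 - sum l I < sum l (J - {x})"
  shows "\<exists>k\<le>5. gwalk l n k [I, J, K] [I, K, J]"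
proof -
  define r where "r = total_len l n / 2 - sum l I"
  have parts: "I \<inter> J = {}" "I \<union> J \<union> K = {1..n}"
    using v unfolding gvertex3_iff by simp_all
  then have fin: "finite I" "finite J"
    by (metis finite_Un finite_atLeastAtMost)+
  have "x \<notin> I"
    using x(1) parts(1) by blast
  then have "sum l (insert x I) = l x + sum l I"
    using fin(1) by simp
  moreover have "sum l (insert x I) \<noteq> total_len l n / 2"
    by (rule gen) (use parts(2) x(1) in blast)
  ultimately consider (large) "r < l x" | (small) "l x < r"
    unfolding r_def by fastforce
  then show ?thesis
  proof cases
    case large
    then have "gwalk l n 3 [I, J, K] [I, K, J]"
      using gwalk_mirror_swap[OF v x(1)] heavy unfolding r_def by blast
    then show ?thesis
      by (intro exI[of _ 3]) simp
  next
    case small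
    have "0 < l x"
      using pos parts(2) x(1) by auto
    then obtain S where S: "S \<subseteq> J - {x}" "S \<noteq> {}" "r - l x < sum l S" "sum l S \<le> r - l x + l x"
      using subset_sum_between[of "J - {x}" l "l x" "r - l x"] fin(2) x(2) small heavy
      unfolding r_def by auto
    have "sum l (I \<union> S) = sum l I + sum l S"
      using fin parts(1) S(1) by (intro sum.union_disjoint) (auto intro: finite_subset)
    moreover have "sum l (I \<union> S) \<noteq> total_len l n / 2"
      by (rule gen) (use parts(2) S(1) in blast)
    ultimately have "sum l S < r"
      using S(4) unfolding r_def by auto
    then have "gwalk l n 5 [I, J, K] [I, K, J]"
      using gwalk_mirror_transfer[OF v x(1) S(1,2)] S(3) heavy unfolding r_def by blast
    then show ?thesis
      by blast
  qed
qed

lemma gwalk_mirror: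
  assumes gen: "\<And>A. A \<subseteq> {1..n} \<Longrightarrow> sum l A \<noteq> total_len l n / 2"
    and pair: "\<And>p q. p \<in> {1..n} \<Longrightarrow> q \<in> {1..n} \<Longrightarrow> p \<noteq> a \<Longrightarrow> q \<noteq> a \<Longrightarrow> p \<noteq> q
                 \<Longrightarrow> l p + l q < total_len l n / 2"
    and v: "gvertex l n [I, J, K]" and a: "a \<in> I"
  shows "\<exists>k\<le>5. gwalk l n k [I, J, K] [I, K, J]"
proof -
  define r where "r = total_len l n / 2 - sum l I"
  have parts: "J \<noteq> {}" "K \<noteq> {}" "I \<inter> J = {}" "I \<inter> K = {}" "J \<inter> K = {}"
    "I \<union> J \<union> K = {1..n}"
    using v unfolding gvertex3_iff by simp_all
  then have fin: "finite I" "finite J" "finite K"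
    by (metis finite_Un finite_atLeastAtMost)+
  obtain x where x: "x \<in> J" and x_max: "\<forall>j\<in>J. l j \<le> l x"
    using obtains_arg_max[OF fin(2) parts(1)] by blast
  obtain y where y: "y \<in> K" and y_max: "\<forall>j\<in>K. l j \<le> l y"
    using obtains_arg_max[OF fin(3) parts(2)] by blast
  have pair_xy: "l x + l y < total_len l n / 2"
    by (rule pair) (use x y a parts(3-6) in blast)+
  have "sum l (I \<union> (J - {x})) = sum l I + sum l (J - {x})"
    "sum l (I \<union> (K - {y})) = sum l I + sum l (K - {y})"
    using fin parts(3,4) by (auto intro: sum.union_disjoint)
  moreover have "sum l (I \<union> (J - {x})) \<noteq> total_len l n / 2"
    "sum l (I \<union> (K - {y})) \<noteq> total_len l n / 2"
    by (rule gen; use parts(6) in blast)+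
  ultimately have "sum l (J - {x}) \<noteq> r" "sum l (K - {y}) \<noteq> r"
    unfolding r_def by auto
  show ?thesis
  proof (cases "r < sum l (J - {x})")
    case True
    then show ?thesis
      using gwalk_mirror_heavy[OF gen v x x_max] unfolding r_def by blast
  next
    case notJ: False
    show ?thesis
    proof (cases "r < sum l (K - {y})")
      case True
      then obtain k where "k \<le> 5" "gwalk l n k [I, K, J] [I, J, K]"
        using gwalk_mirror_heavy[OF gen gvertex_swap23[OF v] y y_max] unfolding r_def by blast
      then show ?thesis
        using gwalk_sym by blast
    next
      case notK: False
      have "sum l (J - {x}) < r" "sum l (K - {y}) < r"
        using notJ notK \<open>sum l (J - {x}) \<noteq> r\<close> \<open>sum l (K - {y}) \<noteq> r\<close> by linarith+
      then show ?thesis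
        using gwalk_mirror_balanced[OF v x y pair_xy] unfolding r_def by blast
    qed
  qed
qed

lemma gwalk_to_mirror:
  assumes gen: "\<And>A. A \<subseteq> {1..n} \<Longrightarrow> sum l A \<noteq> total_len l n / 2"
    and pair: "\<And>p q. p \<in> {1..n} \<Longrightarrow> q \<in> {1..n} \<Longrightarrow> p \<noteq> a \<Longrightarrow> q \<noteq> a \<Longrightarrow> p \<noteq> q
                 \<Longrightarrow> l p + l q < total_len l n / 2"
    and v: "gvertex l n v" and a: "a \<in> {1..n}"
  shows "\<exists>k\<le>5. gwalk l n k v (mirror v)"
proof -
  obtain A B C where v_eq: "v = [A, B, C]"
    using v by (rule gvertex_length3)
  have "a \<in> A \<union> B \<union> C"
    using v a unfolding v_eq gvertex3_iff by blast
  moreover have "gvertex l n [B, C, A]" "gvertex l n [C, A, B]"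
    using v gvertex_rotate3 unfolding v_eq by blast+
  ultimately obtain k where "k \<le> 5"
      "gwalk l n k [A, B, C] [A, C, B] \<or> gwalk l n k [B, C, A] [B, A, C] \<or>
       gwalk l n k [C, A, B] [C, B, A]"
    using gwalk_mirror[OF gen pair] v unfolding v_eq by blast
  then have "gwalk l n k [A, B, C] [B, A, C]"
    using gwalk_cyc_eq[OF _ cyc_eq_refl cyc_eq_rotate3(2)[of A C B]]
      gwalk_cyc_eq[OF _ cyc_eq_rotate3(2)[of B C A] cyc_eq_refl]
      gwalk_cyc_eq[OF _ cyc_eq_rotate3(1)[of C A B] cyc_eq_rotate3(1)[of C B A]]
    by blast
  moreover have "mirror v = [B, A, C]"
    unfolding v_eq mirror_def by simp
  ultimately show ?thesis
    unfolding v_eq using \<open>k \<le> 5\<close> by auto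
qed

end

lemma generic_sum_ne_half:
  assumes "generic l n" "A \<subseteq> {1..n}"
  shows "sum l A \<noteq> total_len l n / 2"
proof -
  have "total_len l n = sum l A + sum l ({1..n} - A)"
    unfolding total_len_def using assms(2) by (metis finite_atLeastAtMost sum.subset_diff add.commute)
  then show ?thesis
    using assms unfolding generic_def by auto
qed

lemma pair_sum_lt_half:
  assumes "l b \<ge> l c" "\<forall>i\<in>{1..n} - {a, b, c}. l i \<le> l c" "l b + l c < total_len l n / 2"
    and "p \<in> {1..n}" "q \<in> {1..n}" "p \<noteq> a" "q \<noteq> a" "p \<noteq> q"
  shows "l p + l q < total_len l n / 2"
proof -
  have below_c: "l i \<le> l c" if "i \<in> {1..n}" "i \<noteq> a" "i \<noteq> b" for i
    using assms(2) that by (cases "i = c") auto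
  show ?thesis
  proof (cases "p = b")
    case True
    then show ?thesis
      using below_c[of q] assms(3,5,7,8) by force
  next
    case False
    then have "l p \<le> l c"
      using below_c[of p] assms(4,6) by blast
    moreover have "l q \<le> l b"
      using below_c[of q] assms(1,5,7) by (cases "q = b") force+
    ultimately show ?thesis
      using assms(3) by linarith
  qed
qed

theorem mainTheorem6:
  fixes l :: "nat \<Rightarrow> real" and n a b c :: nat
  assumes "n \<ge> 4"
    and "length_vector l n"
    and "generic l n"
    and "a \<in> {1..n}" and "b \<in> {1..n}" and "c \<in> {1..n}"
    and "a \<noteq> b" and "a \<noteq> c" and "b \<noteq> c"
    and "l a \<ge> l b" and "l b \<ge> l c"
    and "\<forall>i\<in>{1..n} - {a, b, c}. l i \<le> l c"
    and "l b + l c < total_len l n / 2"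
  shows "\<forall>v. gvertex l n v \<longrightarrow>
           (\<exists>ps. gpath l n ps \<and> cyc_eq (hd ps) v \<and> cyc_eq (last ps) (mirror v)
                 \<and> length ps - 1 \<le> 6)"
proof (intro allI impI)
  fix v
  assume v: "gvertex l n v"
  have pos: "\<forall>i\<in>{1..n}. 0 < l i"
    using assms(2) unfolding length_vector_def by blast
  obtain k where "k \<le> 5" "gwalk l n k v (mirror v)"
    using gwalk_to_mirror[OF pos generic_sum_ne_half[OF assms(3)] pair_sum_lt_half[OF assms(11-13)]
        v assms(4)]
    by blast
  then obtain ps where "gpath l n ps" "hd ps = v" "cyc_eq (last ps) (mirror v)" "length ps = Suc k"
    using gwalk_gpath by blast
  then show "\<exists>ps. gpath l n ps \<and> cyc_eq (hd ps) v \<and> cyc_eq (last ps) (mirror v) \<and> length ps - 1 \<le> 6"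
    using \<open>k \<le> 5\<close> cyc_eq_refl by fastforce
qed

end
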